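(* Under the hypotheses of the preceding proposition (with $A$, $f$, $E\oplus F$, $\mathcal E$ as there), for every $\varepsilon>0$ there is $M>0$ such that for all $x\in\mathbb{R}^d$ and all $y\in\mathcal E(x)$ with $\|x-y\|>M$, $$\|\pi^u_A(x-y)\|<\varepsilon\,\|\pi^s_A(x-y)\|,$$ where $\pi^s_A$ is the projection onto $E^s_A$ along $E^u_A$ and $\pi^u_A$ the projection onto $E^u_A$ along $E^s_A$. In particular $\frac{x-y}{\|x-y\|}$ approaches $E^s_A$ uniformly as $\|x-y\|\to\infty$ with $y\in\mathcal E(x)$.
   Context: Hypotheses: $A$ linear Anosov on $\mathbb{T}^d$ with splitting $E^s_A\oplus E^u_A$, $d_s=\dim E^s_A$, adapted norm with $E^s_A\perp E^u_A$, $\|A|_{E^s_A}\|\le\lambda<1<\gamma\le m(A|_{E^u_A})$ where $m(T)=\|T^{-1}\|^{-1}$; $f$ a diffeomorphism of $\mathbb{T}^d$ homotopic to $A$ with a dominated splitting $E\oplus F$ (continuous, $Df$-invariant, $\|Df^n|_{E(x)}\|\,\|Df^{-n}|_{F(f^nx)}\|\le C\nu^n$, $0<\nu<1$), $\dim E=d_s$, $\dim F=d_u$, $\|Df|_E\|\le\hat\gamma<\gamma$, $m(Df|_F)\ge\hat\lambda>\lambda$, with $E,F$ integrable; $\mathcal E$ is the lift to $\mathbb{R}^d$ of the foliation tangent to $E$. *)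

theory Defs
  imports "HOL-Analysis.Analysis"
begin

definition qnorm :: "real^'n^'n \<Rightarrow> real^'n \<Rightarrow> real" where
  "qnorm Q v = sqrt (v \<bullet> (Q *v v))"

definition pos_def_sym :: "real^'n^'n \<Rightarrow> bool" where
  "pos_def_sym Q \<longleftrightarrow> transpose Q = Q \<and> (\<forall>v. v \<noteq> 0 \<longrightarrow> v \<bullet> (Q *v v) > 0)"

(* integer vectors (deck transformations of R^d -> T^d) *)
definition int_vec :: "real^'n \<Rightarrow> bool" where
  "int_vec k \<longleftrightarrow> (\<forall>i. k $ i \<in> \<int>)"

(* projection onto S along T (for a direct sum S + T = R^d) *)
definition proj_along :: "(real^'n) set \<Rightarrow> (real^'n) set \<Rightarrow> real^'n \<Rightarrow> real^'n" where
  "proj_along S T v = (THE s. s \<in> S \<and> v - s \<in> T)"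

fun dpow :: "(real^'n \<Rightarrow> real^'n \<Rightarrow> real^'n) \<Rightarrow> (real^'n \<Rightarrow> real^'n) \<Rightarrow> nat
             \<Rightarrow> real^'n \<Rightarrow> real^'n \<Rightarrow> real^'n" where
  "dpow DF F 0 x = id"
| "dpow DF F (Suc n) x = DF ((F ^^ n) x) \<circ> dpow DF F n x"

(* continuity of a field of subspaces (gap / Hausdorff distance of unit balls) *)
definition continuous_distribution :: "(real^'n \<Rightarrow> (real^'n) set) \<Rightarrow> bool" where
  "continuous_distribution E \<longleftrightarrow>
     (\<forall>x. \<forall>e>0. \<exists>d>0. \<forall>y. dist y x < d \<longrightarrow>
        (\<forall>v\<in>E x. norm v \<le> 1 \<longrightarrow> (\<exists>w\<in>E y. dist v w < e)) \<and>
        (\<forall>w\<in>E y. norm w \<le> 1 \<longrightarrow> (\<exists>v\<in>E x. dist v w < e)))"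

(* foliation charts: U open, h a homeomorphism of U onto an open convex set, plaques are the
   preimages of the affine slices parallel to L (dim L = k); the inverse chart restricted to
   the slices is C^1 with tangent spaces given by E *)
definition fol_chart :: "(real^'n \<Rightarrow> (real^'n) set) \<Rightarrow> nat
      \<Rightarrow> (real^'n) set \<times> (real^'n \<Rightarrow> real^'n) \<times> (real^'n) set \<Rightarrow> bool" where
  "fol_chart E k c \<longleftrightarrow> (case c of (U, h, L) \<Rightarrow>
      open U \<and> U \<noteq> {} \<and> continuous_on U h \<and> inj_on h U \<and> open (h ` U) \<and> convex (h ` U) \<and>
      continuous_on (h ` U) (inv_into U h) \<and> subspace L \<and> dim L = k \<and>
      (\<exists>D. \<forall>v\<in>h ` U.
          (inv_into U h has_derivative D v) (at v within ((\<lambda>l. v + l) ` L)) \<and>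
          inj_on (D v) L \<and> D v ` L = E (inv_into U h v) \<and>
          (\<forall>l\<in>L. continuous_on (h ` U) (\<lambda>w. D w l))))"

definition plaque :: "(real^'n) set \<times> (real^'n \<Rightarrow> real^'n) \<times> (real^'n) set \<Rightarrow> real^'n \<Rightarrow> (real^'n) set" where
  "plaque c u = (case c of (U, h, L) \<Rightarrow> {w\<in>U. h w - h u \<in> L})"

(* W is the leaf map of a foliation of R^d by k-dimensional C^1 leaves tangent to E:
   a coherent foliated atlas, and W x is the leaf through x (plaque-chain class of x) *)
definition foliation_tangent :: "(real^'n \<Rightarrow> (real^'n) set) \<Rightarrow> nat \<Rightarrow> (real^'n \<Rightarrow> (real^'n) set) \<Rightarrow> bool" where
  "foliation_tangent E k W \<longleftrightarrow>
     (\<exists>\<A>. (\<forall>c\<in>\<A>. fol_chart E k c) \<and> (\<forall>p. \<exists>c\<in>\<A>. p \<in> fst c) \<and>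
        (\<forall>c1\<in>\<A>. \<forall>c2\<in>\<A>. \<forall>u \<in> fst c1 \<inter> fst c2.
            \<exists>N. open N \<and> u \<in> N \<and> plaque c1 u \<inter> N = plaque c2 u \<inter> N) \<and>
        (\<forall>x. W x = \<Inter>{S. x \<in> S \<and> (\<forall>c\<in>\<A>. \<forall>u\<in>S \<inter> fst c. plaque c u \<subseteq> S)}))"

(* lift of a foliation of the torus: invariant under integer translations *)
definition periodic_leaves :: "(real^'n \<Rightarrow> (real^'n) set) \<Rightarrow> bool" where
  "periodic_leaves W \<longleftrightarrow> (\<forall>x k. int_vec k \<longrightarrow> W (x + k) = (\<lambda>y. y + k) ` W x)"

end

theory Submission
  imports Defs
begin

text \<open>Write \<open>F = A + G\<close> with \<open>G\<close> periodic, hence bounded by some \<open>K\<close>. Along a leaf of the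
  foliation tangent to \<open>E\<close>, forward iterates separate at most like \<open>g\<^sup>n\<close> with
  \<open>g = max \<gamma>\<^sub>h 1 < \<gamma>\<close>: on a plaque this is the mean value theorem applied to a path tangent
  to \<open>E\<close>, and a leaf is reached by chains of plaques. On the other hand the \<open>E\<^sup>u\<^sub>A\<close>-component
  of \<open>F\<^sup>n x - F\<^sup>n y\<close> is expanded by at least \<open>\<gamma>\<close> per step up to an error \<open>2K\<close>, so if it
  exceeded \<open>2K/(\<gamma> - 1)\<close> it would grow like \<open>\<gamma>\<^sup>n\<close>. Hence the unstable component of
  \<open>x - y\<close> is bounded on leaves, and the stable component dominates once \<open>x - y\<close> is large.\<close>

section \<open>The adapted norm\<close>

lemma pos_def_sym_inner_commute:
  assumes "pos_def_sym Q" shows "u \<bullet> (Q *v v) = v \<bullet> (Q *v u)"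
proof -
  have "u \<bullet> (Q *v v) = (u v* transpose Q) \<bullet> v"
    using assms by (simp add: dot_lmul_matrix pos_def_sym_def)
  then show ?thesis by (simp add: inner_commute)
qed

lemma pos_def_sym_nonneg: assumes "pos_def_sym Q" shows "0 \<le> v \<bullet> (Q *v v)"
proof (cases "v = 0")
  case False
  then show ?thesis using assms unfolding pos_def_sym_def by (auto intro: less_imp_le)
qed simp

lemma qnorm_nonneg: assumes "pos_def_sym Q" shows "0 \<le> qnorm Q v"
  using pos_def_sym_nonneg[OF assms] by (simp add: qnorm_def)

lemma qnorm_power2: assumes "pos_def_sym Q" shows "qnorm Q v ^ 2 = v \<bullet> (Q *v v)"
  unfolding qnorm_def by (rule real_sqrt_pow2[OF pos_def_sym_nonneg[OF assms]])

lemma qnorm_zero [simp]: "qnorm Q 0 = 0"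
  by (simp add: qnorm_def)

lemma qnorm_scaleR: "qnorm Q (c *\<^sub>R v) = \<bar>c\<bar> * qnorm Q v"
  by (simp add: qnorm_def matrix_vector_mult_scaleR real_sqrt_mult flip: mult.assoc)

lemma qnorm_minus [simp]: "qnorm Q (- v) = qnorm Q v"
  using qnorm_scaleR[of Q "-1" v] by simp

lemma qnorm_add_power2:
  assumes "pos_def_sym Q"
  shows "qnorm Q (u + v) ^ 2 = qnorm Q u ^ 2 + 2 * (u \<bullet> (Q *v v)) + qnorm Q v ^ 2"
  using pos_def_sym_inner_commute[OF assms, of v u]
  by (simp add: qnorm_power2[OF assms] matrix_vector_right_distrib inner_add_left inner_add_right)

lemma continuous_on_qnorm: "continuous_on S (qnorm Q)"
  unfolding qnorm_def by (intro continuous_intros)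

lemma qnorm_cauchy_schwarz:
  assumes Q: "pos_def_sym Q"
  shows "\<bar>u \<bullet> (Q *v v)\<bar> \<le> qnorm Q u * qnorm Q v"
proof -
  define a b c where "a = qnorm Q u ^ 2" and "b = qnorm Q v ^ 2" and "c = u \<bullet> (Q *v v)"
  have quadratic: "0 \<le> a + 2 * t * c + t * t * b" for t
  proof -
    have "0 \<le> qnorm Q (u + t *\<^sub>R v) ^ 2" by simp
    also have "\<dots> = a + 2 * t * c + t * t * b"
      unfolding qnorm_add_power2[OF Q] qnorm_scaleR a_def b_def c_def
      by (simp add: matrix_vector_mult_scaleR power_mult_distrib power2_eq_square)
    finally show ?thesis .
  qed
  have "c ^ 2 \<le> a * b"
  proof (cases "b = 0")
    case True
    have "c = 0"
    proof (rule ccontr)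
      assume "c \<noteq> 0"
      have "0 \<le> a + 2 * (- (a + 1) / (2 * c)) * c" using quadratic[of "- (a + 1) / (2 * c)"] True by simp
      also have "\<dots> = -1" using \<open>c \<noteq> 0\<close> by (simp add: field_simps)
      finally show False by simp
    qed
    then show ?thesis using True by simp
  next
    case False
    then have "b > 0" using b_def by simp
    have "0 \<le> a + 2 * (- c / b) * c + (- c / b) * (- c / b) * b" by (rule quadratic)
    also have "\<dots> = a - c ^ 2 / b" using \<open>b > 0\<close> by (simp add: field_simps power2_eq_square)
    finally show ?thesis using \<open>b > 0\<close> by (simp add: divide_le_eq)
  qed
  then have "\<bar>c\<bar> \<le> sqrt (a * b)" by (simp add: real_le_rsqrt)
  then show ?thesis
    using qnorm_nonneg[OF Q] by (simp add: a_def b_def c_def real_sqrt_mult)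
qed

lemma qnorm_triangle:
  assumes Q: "pos_def_sym Q" shows "qnorm Q (u + v) \<le> qnorm Q u + qnorm Q v"
proof (rule power2_le_imp_le)
  show "qnorm Q (u + v) ^ 2 \<le> (qnorm Q u + qnorm Q v) ^ 2"
    using qnorm_cauchy_schwarz[OF Q, of u v] unfolding qnorm_add_power2[OF Q]
    by (simp add: power2_eq_square algebra_simps)
qed (simp add: qnorm_nonneg[OF Q] add_nonneg_nonneg)

lemma qnorm_diff_le:
  assumes "pos_def_sym Q" shows "qnorm Q (u - v) \<le> qnorm Q u + qnorm Q v"
  using qnorm_triangle[OF assms, of u "- v"] by simp

lemma qnorm_le_orthogonal_add:
  assumes Q: "pos_def_sym Q" and orthogonal: "u \<bullet> (Q *v w) = 0"
  shows "qnorm Q u \<le> qnorm Q (u + w)"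
proof (rule power2_le_imp_le)
  show "qnorm Q u ^ 2 \<le> qnorm Q (u + w) ^ 2"
    using orthogonal by (simp add: qnorm_add_power2[OF Q])
qed (rule qnorm_nonneg[OF Q])

section \<open>Projections along a splitting\<close>

lemma proj_along_eq:
  assumes "subspace S" "subspace T" "S \<inter> T = {0}" "s \<in> S" "t \<in> T"
  shows "proj_along S T (s + t) = s"
  unfolding proj_along_def
proof (rule the_equality)
  fix s' assume s': "s' \<in> S \<and> s + t - s' \<in> T"
  have "s - s' \<in> S" using s' assms by (simp add: subspace_diff)
  moreover have "s - s' \<in> T"
    using subspace_diff[OF assms(2), of "s + t - s'" t] s' assms(5) by simp
  ultimately have "s - s' = 0" using assms(3) by blast
  then show "s' = s" by simp
qed (use assms in simp)

lemma proj_along_decomp: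
  assumes "subspace S" "subspace T" "S + T = UNIV" "S \<inter> T = {0}"
  shows "proj_along S T v \<in> S" "proj_along T S v \<in> T"
    and "v = proj_along S T v + proj_along T S v"
proof -
  obtain s t where v: "v = s + t" "s \<in> S" "t \<in> T"
    using set_plus_elim[of v S T] assms(3) by blast
  have "proj_along S T v = s" using proj_along_eq assms v by blast
  moreover have "proj_along T S v = t"
    using proj_along_eq[of T S t s] assms v by (simp add: add.commute inf_commute)
  ultimately show "proj_along S T v \<in> S" "proj_along T S v \<in> T"
    and "v = proj_along S T v + proj_along T S v" using v by simp_all
qed

lemma proj_along_add:
  assumes "subspace S" "subspace T" "S + T = UNIV" "S \<inter> T = {0}"
  shows "proj_along S T (a + b) = proj_along S T a + proj_along S T b"
proof -
  note decomp = proj_along_decomp[OF assms]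
  have "a + b = (proj_along S T a + proj_along S T b) + (proj_along T S a + proj_along T S b)"
    using decomp(3)[of a] decomp(3)[of b] by (simp add: algebra_simps)
  moreover have "proj_along S T a + proj_along S T b \<in> S" "proj_along T S a + proj_along T S b \<in> T"
    using decomp(1,2) assms(1,2) by (simp_all add: subspace_add)
  ultimately show ?thesis
    using proj_along_eq[OF assms(1,2,4)] by metis
qed

lemma proj_along_matrix_vector_mult:
  assumes "subspace S" "subspace T" "S + T = UNIV" "S \<inter> T = {0}"
    and "(\<lambda>v. A *v v) ` S \<subseteq> S" "(\<lambda>v. A *v v) ` T \<subseteq> T"
  shows "proj_along S T (A *v v) = A *v proj_along S T v"
proof -
  note decomp = proj_along_decomp[OF assms(1-4)]
  have "A *v v = A *v proj_along S T v + A *v proj_along T S v"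
    using decomp(3)[of v] by (metis matrix_vector_right_distrib)
  moreover have "A *v proj_along S T v \<in> S" "A *v proj_along T S v \<in> T"
    using decomp(1,2) assms(5,6) by blast+
  ultimately show ?thesis
    using proj_along_eq[OF assms(1,2,4)] by metis
qed

lemma qnorm_proj_along_le:
  assumes Q: "pos_def_sym Q"
    and "subspace S" "subspace T" "S + T = UNIV" "S \<inter> T = {0}"
    and orthogonal: "\<forall>s\<in>S. \<forall>t\<in>T. s \<bullet> (Q *v t) = 0"
  shows "qnorm Q (proj_along S T v) \<le> qnorm Q v" "qnorm Q (proj_along T S v) \<le> qnorm Q v"
proof -
  note decomp = proj_along_decomp[OF assms(2-5)]
  have "proj_along S T v \<bullet> (Q *v proj_along T S v) = 0"
    using orthogonal decomp(1,2) by blast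
  moreover from this have "proj_along T S v \<bullet> (Q *v proj_along S T v) = 0"
    by (simp add: pos_def_sym_inner_commute[OF Q])
  ultimately show "qnorm Q (proj_along S T v) \<le> qnorm Q v" "qnorm Q (proj_along T S v) \<le> qnorm Q v"
    using qnorm_le_orthogonal_add[OF Q] decomp(3)[of v] by (metis add.commute)+
qed

section \<open>Separation of iterates along leaves\<close>

lemma has_derivative_funpow_dpow:
  assumes "\<And>x. (F has_derivative DF x) (at x)"
  shows "((F ^^ n) has_derivative dpow DF F n z) (at z)"
proof (induction n arbitrary: z)
  case 0
  then show ?case by (simp add: has_derivative_id id_def)
next
  case (Suc n)
  have "((F \<circ> (F ^^ n)) has_derivative (DF ((F ^^ n) z) \<circ> dpow DF F n z)) (at z)"
    by (rule diff_chain_at[OF Suc.IH assms])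
  then show ?case by (simp only: funpow.simps dpow.simps)
qed

lemma dpow_invariant_le:
  fixes N :: "real^'n \<Rightarrow> real"
  assumes invariant: "\<And>x. DF x ` E x = E (F x)"
    and expansion: "\<And>x v. v \<in> E x \<Longrightarrow> N (DF x v) \<le> g * N v"
    and "0 \<le> g" and "v \<in> E z"
  shows "dpow DF F n z v \<in> E ((F ^^ n) z) \<and> N (dpow DF F n z v) \<le> g ^ n * N v"
proof (induction n)
  case 0
  show ?case using \<open>v \<in> E z\<close> by simp
next
  case (Suc n)
  let ?w = "dpow DF F n z v"
  have "DF ((F ^^ n) z) ?w \<in> E (F ((F ^^ n) z))"
    using Suc invariant by blast
  moreover have "N (DF ((F ^^ n) z) ?w) \<le> g * (g ^ n * N v)"
    using Suc expansion[of ?w] mult_left_mono[OF _ \<open>0 \<le> g\<close>] by (meson order_trans)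
  ultimately show ?case by simp
qed

lemma qnorm_increment_le:
  assumes Q: "pos_def_sym Q"
    and deriv: "\<And>t. t \<in> {0..1} \<Longrightarrow> (\<phi> has_derivative (\<lambda>s. s *\<^sub>R \<phi>' t)) (at t within {0..1})"
    and bound: "\<And>t. t \<in> {0..1} \<Longrightarrow> qnorm Q (\<phi>' t) \<le> B"
  shows "qnorm Q (\<phi> 1 - \<phi> 0) \<le> B"
proof -
  define d where "d = \<phi> 1 - \<phi> 0"
  define \<psi> where "\<psi> t = \<phi> t \<bullet> (Q *v d)" for t :: real
  have \<psi>_deriv: "(\<psi> has_derivative (\<lambda>s. s * (\<phi>' t \<bullet> (Q *v d)))) (at t within {0..1})"
    if "t \<in> {0..1}" for t
    unfolding \<psi>_def using bounded_linear.has_derivative[OF bounded_linear_inner_left deriv[OF that]]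
    by simp
  have "continuous_on {0..1} \<psi>"
    using \<psi>_deriv has_derivative_continuous continuous_on_eq_continuous_within by blast
  moreover have "(\<psi> has_derivative (\<lambda>s. s * (\<phi>' t \<bullet> (Q *v d)))) (at t)" if "0 < t" "t < 1" for t
    using \<psi>_deriv[of t] that at_within_interior[of t "{0..1}"] by simp
  ultimately obtain t where t: "t \<in> {0<..<1}" and "norm (\<psi> 1 - \<psi> 0) \<le> norm (\<phi>' t \<bullet> (Q *v d))"
    using mvt_general[of 0 1 \<psi> "\<lambda>t s. s * (\<phi>' t \<bullet> (Q *v d))"] by auto
  moreover have "\<psi> 1 - \<psi> 0 = qnorm Q d ^ 2"
    by (simp add: \<psi>_def d_def inner_diff_left qnorm_power2[OF Q])
  ultimately have "qnorm Q d ^ 2 \<le> qnorm Q (\<phi>' t) * qnorm Q d"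
    using qnorm_cauchy_schwarz[OF Q] by (metis real_norm_def order_trans zero_le_power2 abs_of_nonneg)
  also have "\<dots> \<le> B * qnorm Q d"
    using bound t qnorm_nonneg[OF Q] by (simp add: mult_right_mono)
  finally show ?thesis
    using qnorm_nonneg[OF Q, of d] bound[of 0] qnorm_nonneg[OF Q, of "\<phi>' 0"]
    by (cases "qnorm Q d = 0") (auto simp: d_def power2_eq_square)
qed

text \<open>The path is the image of a segment under the inverse chart.\<close>

lemma plaque_path:
  assumes chart: "fol_chart E k c" and "u \<in> fst c" "w \<in> plaque c u"
  obtains \<gamma> V where "\<gamma> 0 = u" "\<gamma> 1 = w" "continuous_on {0..1} V"
    "\<And>t. t \<in> {0..1} \<Longrightarrow> (\<gamma> has_derivative (\<lambda>s. s *\<^sub>R V t)) (at t within {0..1})"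
    "\<And>t. t \<in> {0..1} \<Longrightarrow> V t \<in> E (\<gamma> t)"
proof -
  obtain U h L where c: "c = (U, h, L)" by (metis prod_cases3)
  have U: "inj_on h U" "convex (h ` U)" "subspace L"
    using chart c by (auto simp: fol_chart_def)
  obtain D where D: "\<And>v. v \<in> h ` U \<Longrightarrow>
          (inv_into U h has_derivative D v) (at v within ((\<lambda>l. v + l) ` L)) \<and>
          D v ` L = E (inv_into U h v) \<and> (\<forall>l\<in>L. continuous_on (h ` U) (\<lambda>w. D w l))"
    using chart c unfolding fol_chart_def by auto
  have "u \<in> U" "w \<in> U" and dL: "h w - h u \<in> L"
    using assms c by (auto simp: plaque_def)
  define d where "d = h w - h u"
  define p where "p t = h u + t *\<^sub>R d" for t :: real
  have pU: "p t \<in> h ` U" if "t \<in> {0..1}" for t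
  proof -
    have "(1 - t) *\<^sub>R h u + t *\<^sub>R h w \<in> h ` U"
      using convexD[OF U(2)] that \<open>u \<in> U\<close> \<open>w \<in> U\<close> by auto
    then show ?thesis by (simp add: p_def d_def algebra_simps)
  qed
  define \<gamma> where "\<gamma> t = inv_into U h (p t)" for t
  define V where "V t = D (p t) d" for t
  have "\<gamma> 0 = u" "\<gamma> 1 = w"
    using U(1) \<open>u \<in> U\<close> \<open>w \<in> U\<close> by (auto simp: \<gamma>_def p_def d_def)
  moreover have "continuous_on {0..1} V"
  proof -
    have "continuous_on (h ` U) (\<lambda>w. D w d)" using D[OF pU[of 0]] dL d_def by auto
    moreover have "continuous_on {0..1} p" unfolding p_def by (intro continuous_intros)
    ultimately show ?thesis unfolding V_def
      by (rule continuous_on_compose2) (use pU in auto)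
  qed
  moreover have "(\<gamma> has_derivative (\<lambda>s. s *\<^sub>R V t)) (at t within {0..1})"
    if t: "t \<in> {0..1}" for t
  proof -
    have p_deriv: "(p has_derivative (\<lambda>s. s *\<^sub>R d)) (at t within {0..1})"
      unfolding p_def by (auto intro!: derivative_eq_intros)
    have "p ` {0..1} \<subseteq> (\<lambda>l. p t + l) ` L"
    proof
      fix y assume "y \<in> p ` {0..1}"
      then obtain s where "y = p s" by auto
      then have "y = p t + (s - t) *\<^sub>R d" by (simp add: p_def algebra_simps)
      moreover have "(s - t) *\<^sub>R d \<in> L" using U(3) dL d_def by (simp add: subspace_scale)
      ultimately show "y \<in> (\<lambda>l. p t + l) ` L" by blast
    qed
    moreover have "(inv_into U h has_derivative D (p t)) (at (p t) within (\<lambda>l. p t + l) ` L)"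
      using D[OF pU[OF t]] by blast
    ultimately have inv_deriv: "(inv_into U h has_derivative D (p t)) (at (p t) within p ` {0..1})"
      by (rule has_derivative_subset[rotated])
    have "(\<gamma> has_derivative (\<lambda>s. D (p t) (s *\<^sub>R d))) (at t within {0..1})"
      unfolding \<gamma>_def using diff_chain_within[OF p_deriv inv_deriv] by (simp add: comp_def)
    moreover have "D (p t) (s *\<^sub>R d) = s *\<^sub>R V t" for s
      using linear_scale[OF has_derivative_linear[OF inv_deriv]] by (simp add: V_def)
    ultimately show ?thesis by simp
  qed
  moreover have "V t \<in> E (\<gamma> t)" if "t \<in> {0..1}" for t
    using D[OF pU[OF that]] dL unfolding V_def \<gamma>_def d_def by blast
  ultimately show ?thesis using that by blast
qed

lemma plaque_orbit_bound:
  assumes Q: "pos_def_sym Q"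
    and chart: "fol_chart E k c" and "u \<in> fst c" "w \<in> plaque c u"
    and deriv: "\<And>n z. ((F ^^ n) has_derivative dpow DF F n z) (at z)"
    and expansion: "\<And>n z v. v \<in> E z \<Longrightarrow> qnorm Q (dpow DF F n z v) \<le> g ^ n * qnorm Q v"
    and "0 \<le> g"
  shows "\<exists>B. \<forall>n. qnorm Q ((F ^^ n) u - (F ^^ n) w) \<le> g ^ n * B"
proof -
  obtain \<gamma> V where \<gamma>: "\<gamma> 0 = u" "\<gamma> 1 = w" "continuous_on {0..1} V"
    "\<And>t. t \<in> {0..1} \<Longrightarrow> (\<gamma> has_derivative (\<lambda>s. s *\<^sub>R V t)) (at t within {0..1})"
    "\<And>t. t \<in> {0..1} \<Longrightarrow> V t \<in> E (\<gamma> t)"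
    using plaque_path[OF chart assms(3,4)] by blast
  have "continuous_on {0..1} (\<lambda>t. qnorm Q (V t))"
    by (rule continuous_on_compose2[OF continuous_on_qnorm \<gamma>(3)]) auto
  then obtain B where B: "\<And>t. t \<in> {0..1} \<Longrightarrow> qnorm Q (V t) \<le> B"
    using continuous_attains_sup[OF compact_Icc] by (metis atLeastAtMost_iff order.refl zero_le_one empty_iff)
  have "qnorm Q ((F ^^ n) w - (F ^^ n) u) \<le> g ^ n * B" for n
  proof -
    have deriv_n: "((\<lambda>t. (F ^^ n) (\<gamma> t)) has_derivative (\<lambda>s. s *\<^sub>R dpow DF F n (\<gamma> t) (V t)))
        (at t within {0..1})" if "t \<in> {0..1}" for t
      using diff_chain_within[OF \<gamma>(4)[OF that] has_derivative_at_withinI[OF deriv]]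
        linear_scale[OF has_derivative_linear[OF deriv]] by (simp add: comp_def)
    have bound_n: "qnorm Q (dpow DF F n (\<gamma> t) (V t)) \<le> g ^ n * B" if "t \<in> {0..1}" for t
      using expansion[OF \<gamma>(5)[OF that]] B[OF that] \<open>0 \<le> g\<close>
      by (meson mult_left_mono order_trans zero_le_power)
    show ?thesis
      using qnorm_increment_le[OF Q deriv_n bound_n] \<gamma>(1,2) by simp
  qed
  then show ?thesis by (metis qnorm_minus minus_diff_eq)
qed

lemma leaf_subset_if_plaque_closed:
  assumes "foliation_tangent E k W" "x \<in> S"
    and closed: "\<And>c u. fol_chart E k c \<Longrightarrow> u \<in> S \<Longrightarrow> u \<in> fst c \<Longrightarrow> plaque c u \<subseteq> S"
  shows "W x \<subseteq> S"
proof -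
  obtain \<A> where "\<forall>c\<in>\<A>. fol_chart E k c"
    and "\<forall>x. W x = \<Inter>{S. x \<in> S \<and> (\<forall>c\<in>\<A>. \<forall>u\<in>S \<inter> fst c. plaque c u \<subseteq> S)}"
    using assms(1) unfolding foliation_tangent_def by blast
  then show ?thesis using assms(2) closed by blast
qed

lemma leaf_orbit_bound:
  assumes Q: "pos_def_sym Q" and foliation: "foliation_tangent E k W"
    and deriv: "\<And>n z. ((F ^^ n) has_derivative dpow DF F n z) (at z)"
    and expansion: "\<And>n z v. v \<in> E z \<Longrightarrow> qnorm Q (dpow DF F n z v) \<le> g ^ n * qnorm Q v"
    and "0 \<le> g" and "y \<in> W x"
  shows "\<exists>B. \<forall>n. qnorm Q ((F ^^ n) x - (F ^^ n) y) \<le> g ^ n * B"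
proof -
  define S where "S = {y. \<exists>B. \<forall>n. qnorm Q ((F ^^ n) x - (F ^^ n) y) \<le> g ^ n * B}"
  have "W x \<subseteq> S"
  proof (rule leaf_subset_if_plaque_closed[OF foliation])
    show "x \<in> S" unfolding S_def by (intro CollectI exI[of _ 0] allI) simp
  next
    fix c u assume c: "fol_chart E k c" and "u \<in> S" "u \<in> fst c"
    show "plaque c u \<subseteq> S"
    proof
      fix w assume "w \<in> plaque c u"
      obtain B1 where B1: "\<And>n. qnorm Q ((F ^^ n) x - (F ^^ n) u) \<le> g ^ n * B1"
        using \<open>u \<in> S\<close> unfolding S_def by blast
      obtain B2 where B2: "\<And>n. qnorm Q ((F ^^ n) u - (F ^^ n) w) \<le> g ^ n * B2"
        using plaque_orbit_bound[OF Q c \<open>u \<in> fst c\<close> \<open>w \<in> plaque c u\<close> deriv expansion \<open>0 \<le> g\<close>]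
        by blast
      have "qnorm Q ((F ^^ n) x - (F ^^ n) w) \<le> g ^ n * (B1 + B2)" for n
        using qnorm_triangle[OF Q, of "(F ^^ n) x - (F ^^ n) u" "(F ^^ n) u - (F ^^ n) w"]
          B1[of n] B2[of n] by (simp add: distrib_left)
      then show "w \<in> S" unfolding S_def by blast
    qed
  qed
  then show ?thesis using \<open>y \<in> W x\<close> S_def by blast
qed

section \<open>Growth of the unstable component\<close>

lemma periodic_continuous_bounded:
  fixes G :: "real^'n \<Rightarrow> 'a::metric_space"
  assumes "continuous_on UNIV G" and periodic: "\<And>z k. int_vec k \<Longrightarrow> G (z + k) = G z"
  shows "bounded (range G)"
proof -
  have "range G \<subseteq> G ` cbox 0 1"
  proof
    fix y assume "y \<in> range G"
    then obtain z where "y = G z" by blast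
    define r where "r = (\<chi> i. frac (z $ i))"
    define k where "k = (\<chi> i. real_of_int \<lfloor>z $ i\<rfloor>)"
    have "z = r + k" by (simp add: vec_eq_iff r_def k_def frac_def)
    moreover have "int_vec k" by (simp add: int_vec_def k_def)
    ultimately have "y = G r" using periodic \<open>y = G z\<close> by simp
    moreover have "r \<in> cbox 0 1" by (simp add: mem_box_cart r_def frac_lt_1 less_imp_le)
    ultimately show "y \<in> G ` cbox 0 1" by blast
  qed
  moreover have "compact (G ` cbox 0 1)"
    by (intro compact_continuous_image continuous_on_subset[OF assms(1)] compact_cbox) simp
  ultimately show ?thesis using bounded_subset compact_imp_bounded by blast
qed

lemma affine_recurrence_lower_bound:
  fixes a :: "nat \<Rightarrow> real"
  assumes "0 \<le> r" "r \<noteq> 1" and step: "\<And>n. r * a n - c \<le> a (Suc n)"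
  shows "r ^ n * (a 0 - c / (r - 1)) \<le> a n - c / (r - 1)"
proof (induction n)
  case (Suc n)
  have "r * (a n - c / (r - 1)) = r * a n - c - c / (r - 1)"
    using \<open>r \<noteq> 1\<close> by (simp add: field_simps)
  then have "r * (a n - c / (r - 1)) \<le> a (Suc n) - c / (r - 1)" using step[of n] by simp
  then show ?case using mult_left_mono[OF Suc.IH \<open>0 \<le> r\<close>] by simp
qed simp

lemma nonpos_if_power_dominated:
  fixes a b g r :: real
  assumes "0 < g" "g < r" and dominated: "\<And>n. r ^ n * a \<le> g ^ n * b"
  shows "a \<le> 0"
proof (rule ccontr)
  assume "\<not> a \<le> 0"
  obtain n where n: "b / a < (r / g) ^ n"
    using real_arch_pow[of "r / g"] assms(1,2) by auto
  have "(r / g) ^ n * a \<le> b"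
    using dominated[of n] \<open>0 < g\<close> by (simp add: power_divide pos_divide_le_eq mult.commute)
  then show False using n \<open>\<not> a \<le> 0\<close> by (simp add: divide_less_eq mult.commute)
qed

lemma periodic_perturbation_bounded:
  assumes Q: "pos_def_sym Q"
    and F_deriv: "\<forall>x. (F has_derivative DF x) (at x)"
    and F_equiv: "\<forall>x k. int_vec k \<longrightarrow> F (x + k) = F x + A *v k"
  obtains K where "\<And>z. qnorm Q (F z - A *v z) \<le> K"
proof -
  have "bounded (range (\<lambda>z. qnorm Q (F z - A *v z)))"
  proof (rule periodic_continuous_bounded)
    have "continuous_on UNIV F"
      by (intro continuous_at_imp_continuous_on ballI has_derivative_continuous[OF F_deriv[rule_format]])
    then show "continuous_on UNIV (\<lambda>z. qnorm Q (F z - A *v z))"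
      by (intro continuous_on_compose2[OF continuous_on_qnorm] continuous_intros) auto
    show "qnorm Q (F (z + k) - A *v (z + k)) = qnorm Q (F z - A *v z)" if "int_vec k" for z k
      using F_equiv that by (simp add: matrix_vector_right_distrib)
  qed
  then show thesis
    using that unfolding bounded_real by (auto intro: order_trans[OF abs_ge_self])
qed

text \<open>The error \<open>2K\<close> accounts for the periodic part \<open>F - A\<close> at both points.\<close>

lemma unstable_component_step:
  assumes Q: "pos_def_sym Q"
    and subspaces: "subspace Es" "subspace Eu" "Es + Eu = UNIV" "Es \<inter> Eu = {0}"
    and A_Es: "(\<lambda>v. A *v v) ` Es \<subseteq> Es" and A_Eu: "(\<lambda>v. A *v v) ` Eu \<subseteq> Eu"
    and orthogonal: "\<forall>u\<in>Es. \<forall>w\<in>Eu. u \<bullet> (Q *v w) = 0"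
    and A_expanding: "\<forall>v\<in>Eu. gam * qnorm Q v \<le> qnorm Q (A *v v)"
    and K: "\<And>z. qnorm Q (F z - A *v z) \<le> K"
  shows "gam * qnorm Q (proj_along Eu Es (p - q)) - 2 * K \<le> qnorm Q (proj_along Eu Es (F p - F q))"
proof -
  let ?pu = "proj_along Eu Es"
  define e where "e = (F p - A *v p) - (F q - A *v q)"
  have subspaces': "Eu + Es = UNIV" "Eu \<inter> Es = {0}"
    using subspaces by (simp_all add: add.commute Int_commute)
  have "F p - F q = A *v (p - q) + e"
    by (simp add: e_def matrix_vector_mult_diff_distrib)
  then have "?pu (F p - F q) = A *v ?pu (p - q) + ?pu e"
    by (simp only: proj_along_add[OF subspaces(2,1) subspaces']
      proj_along_matrix_vector_mult[OF subspaces(2,1) subspaces' A_Eu A_Es])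
  then have "A *v ?pu (p - q) = ?pu (F p - F q) - ?pu e" by simp
  then have "qnorm Q (A *v ?pu (p - q)) \<le> qnorm Q (?pu (F p - F q)) + qnorm Q (?pu e)"
    using qnorm_diff_le[OF Q] by metis
  moreover have "gam * qnorm Q (?pu (p - q)) \<le> qnorm Q (A *v ?pu (p - q))"
    using A_expanding proj_along_decomp(1)[OF subspaces(2,1) subspaces'] by blast
  moreover have "qnorm Q (?pu e) \<le> qnorm Q e"
    by (rule qnorm_proj_along_le(2)[OF Q subspaces orthogonal])
  moreover have "qnorm Q e \<le> 2 * K"
    using qnorm_diff_le[OF Q, of "F p - A *v p" "F q - A *v q"] K[of p] K[of q] by (simp add: e_def)
  ultimately show ?thesis by simp
qed

lemma leaf_unstable_component_bounded:
  fixes A Q :: "real^'n^'n"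
  assumes Q: "pos_def_sym Q"
    and subspaces: "subspace Es" "subspace Eu" "Es + Eu = UNIV" "Es \<inter> Eu = {0}"
    and A_Es: "(\<lambda>v. A *v v) ` Es \<subseteq> Es" and A_Eu: "(\<lambda>v. A *v v) ` Eu \<subseteq> Eu"
    and orthogonal: "\<forall>u\<in>Es. \<forall>w\<in>Eu. u \<bullet> (Q *v w) = 0"
    and A_expanding: "\<forall>v\<in>Eu. gam * qnorm Q v \<le> qnorm Q (A *v v)" and "1 < gam"
    and F_deriv: "\<forall>x. (F has_derivative DF x) (at x)"
    and F_equiv: "\<forall>x k. int_vec k \<longrightarrow> F (x + k) = F x + A *v k"
    and E_invariant: "\<forall>x. DF x ` E x = E (F x)"
    and E_expansion: "\<forall>x. \<forall>v\<in>E x. qnorm Q (DF x v) \<le> gamh * qnorm Q v" and "gamh < gam"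
    and foliation: "foliation_tangent E k WE"
  obtains B where "0 \<le> B" "\<And>x y. y \<in> WE x \<Longrightarrow> qnorm Q (proj_along Eu Es (x - y)) \<le> B"
proof -
  define g where "g = max gamh 1"
  have g: "0 < g" "g < gam" using \<open>gamh < gam\<close> \<open>1 < gam\<close> by (auto simp: g_def)
  have deriv: "((F ^^ n) has_derivative dpow DF F n z) (at z)" for n z
    by (rule has_derivative_funpow_dpow) (use F_deriv in blast)
  have DF_expansion: "qnorm Q (DF x v) \<le> g * qnorm Q v" if "v \<in> E x" for x v
    using E_expansion that mult_right_mono[OF max.cobounded1 qnorm_nonneg[OF Q]]
    unfolding g_def by (meson order_trans)
  have expansion: "qnorm Q (dpow DF F n z v) \<le> g ^ n * qnorm Q v" if "v \<in> E z" for n z v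
    using dpow_invariant_le[where N = "qnorm Q" and g = g and DF = DF and E = E and F = F,
        OF _ DF_expansion less_imp_le[OF g(1)] that] E_invariant by blast
  obtain K where K: "\<And>z. qnorm Q (F z - A *v z) \<le> K"
    using periodic_perturbation_bounded[OF Q F_deriv F_equiv] by blast
  have "0 \<le> K" using K[of 0] qnorm_nonneg[OF Q] order_trans by blast
  note step = unstable_component_step[OF Q subspaces A_Es A_Eu orthogonal A_expanding K]
  define Bc where "Bc = 2 * K / (gam - 1)" \<comment> \<open>the fixed point of \<open>a \<mapsto> \<gamma> a - 2K\<close>\<close>
  show thesis
  proof (rule that)
    show "0 \<le> Bc" using \<open>0 \<le> K\<close> \<open>1 < gam\<close> by (simp add: Bc_def)
    fix x y assume "y \<in> WE x"
    obtain B where B: "\<And>n. qnorm Q ((F ^^ n) x - (F ^^ n) y) \<le> g ^ n * B"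
      using leaf_orbit_bound[OF Q foliation deriv expansion _ \<open>y \<in> WE x\<close>] g by auto
    define a where "a n = qnorm Q (proj_along Eu Es ((F ^^ n) x - (F ^^ n) y))" for n
    have "gam ^ n * (a 0 - Bc) \<le> g ^ n * B" for n
    proof -
      have "gam ^ n * (a 0 - Bc) \<le> a n - Bc"
        unfolding Bc_def using \<open>1 < gam\<close> step
        by (intro affine_recurrence_lower_bound) (simp_all add: a_def)
      also have "\<dots> \<le> qnorm Q ((F ^^ n) x - (F ^^ n) y)"
        unfolding a_def
        using qnorm_proj_along_le(2)[OF Q subspaces orthogonal, of "(F ^^ n) x - (F ^^ n) y"]
          \<open>0 \<le> Bc\<close> by linarith
      finally show ?thesis using B[of n] by simp
    qed
    then have "a 0 - Bc \<le> 0" by (rule nonpos_if_power_dominated[OF g])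
    then show "qnorm Q (proj_along Eu Es (x - y)) \<le> Bc" by (simp add: a_def)
  qed
qed

lemma unstable_component_eventually_small:
  assumes Q: "pos_def_sym Q"
    and subspaces: "subspace Es" "subspace Eu" "Es + Eu = UNIV" "Es \<inter> Eu = {0}"
    and bounded: "\<And>v. v \<in> V \<Longrightarrow> qnorm Q (proj_along Eu Es v) \<le> B" and "0 \<le> B" and "0 < \<epsilon>"
  obtains M where "0 < M"
    "\<And>v. v \<in> V \<Longrightarrow> M < qnorm Q v \<Longrightarrow> qnorm Q (proj_along Eu Es v) < \<epsilon> * qnorm Q (proj_along Es Eu v)"
proof (rule that)
  have "0 \<le> B / \<epsilon>" using \<open>0 \<le> B\<close> \<open>0 < \<epsilon>\<close> by simp
  then show "0 < B + B / \<epsilon> + 1" using \<open>0 \<le> B\<close> by linarith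
  fix v assume "v \<in> V" and large: "B + B / \<epsilon> + 1 < qnorm Q v"
  have "qnorm Q v \<le> qnorm Q (proj_along Es Eu v) + qnorm Q (proj_along Eu Es v)"
    using qnorm_triangle[OF Q] proj_along_decomp[OF subspaces] by metis
  then have "B / \<epsilon> < qnorm Q (proj_along Es Eu v)" using large bounded[OF \<open>v \<in> V\<close>] by simp
  then have "B < \<epsilon> * qnorm Q (proj_along Es Eu v)"
    using \<open>0 < \<epsilon>\<close> by (simp add: pos_divide_less_eq mult.commute)
  then show "qnorm Q (proj_along Eu Es v) < \<epsilon> * qnorm Q (proj_along Es Eu v)"
    using bounded[OF \<open>v \<in> V\<close>] by simp
qed

theorem mainTheorem8:
  fixes A :: "real^'n^'n" and Q :: "real^'n^'n"
    and Es Eu :: "(real^'n) set" and lam gam :: real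
    and F :: "real^'n \<Rightarrow> real^'n" and DF :: "real^'n \<Rightarrow> real^'n \<Rightarrow> real^'n"
    and E Fd :: "real^'n \<Rightarrow> (real^'n) set"
    and C nu lamh gamh :: real
    and WE :: "real^'n \<Rightarrow> (real^'n) set"
  defines "N \<equiv> qnorm Q"
  (* A linear Anosov automorphism of T^d: A in GL(d,Z) with hyperbolic splitting *)
  assumes A_int: "\<forall>i j. A $ i $ j \<in> \<int>" and A_det: "\<bar>det A\<bar> = 1"
    and Es_sub: "subspace Es" and Eu_sub: "subspace Eu"
    and split_A: "Es + Eu = UNIV" "Es \<inter> Eu = {0}"
    and inv_A: "(\<lambda>v. A *v v) ` Es = Es" "(\<lambda>v. A *v v) ` Eu = Eu"
  (* adapted norm (inner product) with E^s_A orthogonal to E^u_A *)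
    and Q_pd: "pos_def_sym Q"
    and orth: "\<forall>u\<in>Es. \<forall>w\<in>Eu. u \<bullet> (Q *v w) = 0"
    and lam_bd: "\<forall>v\<in>Es. N (A *v v) \<le> lam * N v" and lam_lt: "lam < 1"
    and gam_bd: "\<forall>v\<in>Eu. N (A *v v) \<ge> gam * N v" and gam_gt: "1 < gam"
  (* F is the lift of a C^1 diffeomorphism f of T^d homotopic to A *)
    and F_deriv: "\<forall>x. (F has_derivative DF x) (at x)"
    and DF_cont: "\<forall>v. continuous_on UNIV (\<lambda>x. DF x v)"
    and F_bij: "bij F"
    and Finv_C1: "\<exists>DG. (\<forall>x. (inv F has_derivative DG x) (at x)) \<and> (\<forall>v. continuous_on UNIV (\<lambda>x. DG x v))"
    and F_equiv: "\<forall>x k. int_vec k \<longrightarrow> F (x + k) = F x + A *v k"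
  (* dominated splitting E + Fd (lifted from the torus) *)
    and E_sub: "\<forall>x. subspace (E x)" and Fd_sub: "\<forall>x. subspace (Fd x)"
    and split_f: "\<forall>x. E x + Fd x = UNIV" "\<forall>x. E x \<inter> Fd x = {0}"
    and dimE: "\<forall>x. dim (E x) = dim Es" and dimF: "\<forall>x. dim (Fd x) = dim Eu"
    and E_per: "\<forall>x k. int_vec k \<longrightarrow> E (x + k) = E x"
    and Fd_per: "\<forall>x k. int_vec k \<longrightarrow> Fd (x + k) = Fd x"
    and E_cont: "continuous_distribution E" and Fd_cont: "continuous_distribution Fd"
    and E_inv: "\<forall>x. DF x ` E x = E (F x)" and Fd_inv: "\<forall>x. DF x ` Fd x = Fd (F x)"
    and C_pos: "C > 0" and nu: "0 < nu" "nu < 1"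
    and dominated: "\<forall>n x. \<forall>u\<in>E x. \<forall>w\<in>Fd x. w \<noteq> 0 \<longrightarrow>
          N (dpow DF F n x u) * N w \<le> C * nu ^ n * N u * N (dpow DF F n x w)"
    and gamh_bd: "\<forall>x. \<forall>v\<in>E x. N (DF x v) \<le> gamh * N v" and gamh_lt: "gamh < gam"
    and lamh_bd: "\<forall>x. \<forall>v\<in>Fd x. N (DF x v) \<ge> lamh * N v" and lamh_gt: "lamh > lam"
  (* E and F integrable; WE is the lift of the foliation tangent to E *)
    and WE_fol: "foliation_tangent E (dim Es) WE" and WE_per: "periodic_leaves WE"
    and F_integrable: "\<exists>WF. foliation_tangent Fd (dim Eu) WF \<and> periodic_leaves WF"
  shows "\<forall>\<epsilon>>0. \<exists>M>0. \<forall>x. \<forall>y\<in>WE x. N (x - y) > M \<longrightarrow>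
           N (proj_along Eu Es (x - y)) < \<epsilon> * N (proj_along Es Eu (x - y))"
proof (intro allI impI)
  fix \<epsilon> :: real assume "0 < \<epsilon>"
  have A_Es: "(\<lambda>v. A *v v) ` Es \<subseteq> Es" and A_Eu: "(\<lambda>v. A *v v) ` Eu \<subseteq> Eu"
    using inv_A by simp_all
  obtain B where "0 \<le> B" and B: "\<And>x y. y \<in> WE x \<Longrightarrow> N (proj_along Eu Es (x - y)) \<le> B"
    using leaf_unstable_component_bounded[OF Q_pd Es_sub Eu_sub split_A A_Es A_Eu orth _ gam_gt
        F_deriv F_equiv E_inv _ gamh_lt WE_fol] gam_bd gamh_bd
    unfolding N_def by blast
  obtain M where "0 < M" and "\<And>v. v \<in> {x - y |x y. y \<in> WE x} \<Longrightarrow> M < N v \<Longrightarrow>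
      N (proj_along Eu Es v) < \<epsilon> * N (proj_along Es Eu v)"
    using unstable_component_eventually_small[OF Q_pd Es_sub Eu_sub split_A, of "{x - y |x y. y \<in> WE x}"]
      B \<open>0 \<le> B\<close> \<open>0 < \<epsilon>\<close> unfolding N_def by blast
  then show "\<exists>M>0. \<forall>x. \<forall>y\<in>WE x. M < N (x - y) \<longrightarrow>
      N (proj_along Eu Es (x - y)) < \<epsilon> * N (proj_along Es Eu (x - y))"
    by blast
qed

end
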